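(* Let $g \in L^1(0,1)$. Then $$\int_{0}^{1} \mathbf{E}(\sqrt{x})\, g(x)\,dx = \int_{0}^{1} \left[\frac{\pi}{2}-\left(\frac{\pi}{2}-1\right)\sqrt{x}\right]g(x)\,dx + \frac{1}{3}\iint_{(0,1)^2} \left(\mathbf{K}(\sqrt{x})-\frac{\pi}{2}\right) g\!\left(xz^{2/3}\right)\,dz\,dx.$$
   Context: $\mathbf{K}(k) = \int_0^{\pi/2} \frac{d\theta}{\sqrt{1-k^2\sin^2\theta}} = \frac{\pi}{2}{}_2F_1(\tfrac12,\tfrac12;1;k^2)$ and $\mathbf{E}(k) = \int_0^{\pi/2}\sqrt{1-k^2\sin^2\theta}\,d\theta = \frac{\pi}{2}{}_2F_1(\tfrac12,-\tfrac12;1;k^2)$ are the complete elliptic integrals of the first and second kinds. *)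

theory Defs
  imports "HOL-Analysis.Analysis"
begin

definition ellipticK :: "real \<Rightarrow> real" where
  "ellipticK k = integral {0..pi/2} (\<lambda>\<theta>. 1 / sqrt (1 - k^2 * (sin \<theta>)^2))"

definition ellipticE :: "real \<Rightarrow> real" where
  "ellipticE k = integral {0..pi/2} (\<lambda>\<theta>. sqrt (1 - k^2 * (sin \<theta>)^2))"

end

theory Submission
  imports Defs
begin

text \<open>Write \<open>\<kappa>(y) = K(\<surd>y) - \<pi>/2\<close>. Substituting \<open>t = x z\<^sup>2\<^sup>/\<^sup>3\<close> in the inner \<open>x\<close>-integral
  and swapping the order of integration turns the double integral into
  \<open>\<integral> g(t) W(t) dt\<close> with \<open>W(t) = \<integral>\<^sub>0\<^sup>1 z\<^sup>-\<^sup>2\<^sup>/\<^sup>3 \<kappa>(t z\<^sup>-\<^sup>2\<^sup>/\<^sup>3) dz\<close>. Writing \<open>\<kappa>\<close> as an integral over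
  \<open>\<theta> \<in> [0, \<pi>/2]\<close> and integrating in \<open>z\<close> first, the \<open>z\<close>-integrand has the elementary
  antiderivative \<open>3 (\<surd>(z\<^sup>2\<^sup>/\<^sup>3 - t sin\<^sup>2 \<theta>) - z\<^sup>1\<^sup>/\<^sup>3)\<close>, which yields
  \<open>W(t) = 3 (E(\<surd>t) - \<pi>/2 + (\<pi>/2 - 1) \<surd>t)\<close>. All integrands are nonnegative for
  \<open>g \<ge> 0\<close>, so Tonelli applies, and the general case follows by splitting \<open>g\<close> into its
  positive and negative parts.\<close>

lemma integral_eq_lborel_indicator:
  fixes f :: "real \<Rightarrow> real"
  assumes "continuous_on {a..b} f"
  shows "integral {a..b} f = (\<integral>x. f x * indicator {a..b} x \<partial>lborel)"
  using set_borel_integral_eq_integral(2)[OF borel_integrable_atLeastAtMost'[OF assms]]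
  unfolding set_lebesgue_integral_def by (simp add: mult.commute)

lemma set_integrable_bounded_mult:
  fixes f g :: "'a \<Rightarrow> real"
  assumes g: "set_integrable M A g" and f[measurable]: "f \<in> borel_measurable M"
    and bound: "\<And>x. x \<in> A \<Longrightarrow> \<bar>f x\<bar> \<le> C"
  shows "set_integrable M A (\<lambda>x. f x * g x)"
proof -
  have int: "integrable M (\<lambda>x. indicator A x * g x)"
    using g by (simp add: set_integrable_def)
  note [measurable] = borel_measurable_integrable[OF int]
  have "integrable M (\<lambda>x. f x * (indicator A x * g x))"
  proof (rule Bochner_Integration.integrable_bound[OF integrable_mult_right[OF int, of C]])
    have "\<bar>f x\<bar> * \<bar>g x\<bar> \<le> \<bar>C\<bar> * \<bar>g x\<bar>" if "x \<in> A" for x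
      using bound[OF that] by (intro mult_right_mono) auto
    then show "AE x in M. norm (f x * (indicator A x * g x)) \<le> norm (C * (indicator A x * g x))"
      by (intro AE_I2) (auto simp: abs_mult indicator_def)
  qed measurable
  then show ?thesis
    by (simp add: set_integrable_def mult.left_commute)
qed

lemma one_minus_mult_sin_sq_pos:
  fixes y t :: real
  assumes "0 \<le> y" "y < 1"
  shows "0 < 1 - y * (sin t)^2"
proof -
  have "y * (sin t)^2 \<le> y"
    using assms by (simp add: mult_left_le abs_square_le_1)
  then show ?thesis using assms by linarith
qed

lemma one_le_inverse_sqrt_one_minus:
  fixes a :: real
  assumes "0 \<le> a" "a < 1"
  shows "1 \<le> 1 / sqrt (1 - a)"
  using assms by (simp add: field_simps real_sqrt_le_1_iff)

lemma powr_two_thirds_gt_iff: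
  fixes u z :: real
  assumes "0 < u" "0 < z"
  shows "u < z powr (2/3) \<longleftrightarrow> u powr (3/2) < z"
proof
  assume "u < z powr (2/3)"
  then have "u powr (3/2) < (z powr (2/3)) powr (3/2)" using assms by (intro powr_less_mono2) auto
  then show "u powr (3/2) < z" using assms by (simp add: powr_powr)
next
  assume "u powr (3/2) < z"
  then have "(u powr (3/2)) powr (2/3) < z powr (2/3)" using assms by (intro powr_less_mono2) auto
  then show "u < z powr (2/3)" using assms by (simp add: powr_powr)
qed

lemma mult_powr_two_thirds_mem_unit_interval:
  fixes x z :: real
  assumes "x \<in> {0<..<1}" "z \<in> {0<..<1}"
  shows "x * z powr (2/3) \<in> {0<..<1}"
proof -
  have "x * z powr (2/3) < 1 * 1"
    using assms powr_less_mono2[of "2/3" z 1] by (intro mult_strict_mono) auto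
  then show ?thesis using assms by simp
qed

definition K_kernel :: "real \<Rightarrow> real \<Rightarrow> real" where
  "K_kernel y \<theta> = 1 / sqrt (1 - y * (sin \<theta>)^2) - 1"

text \<open>\<open>3 E_kernel u \<theta>\<close> is the increment of the antiderivative in
  \<open>rescaled_K_kernel_antiderivative\<close> (with \<open>q = sin\<^sup>2 \<theta>\<close>) from \<open>z = u\<^sup>3\<^sup>/\<^sup>2\<close> to \<open>z = 1\<close>.\<close>

definition E_kernel :: "real \<Rightarrow> real \<Rightarrow> real" where
  "E_kernel u \<theta> = sqrt (1 - u * (sin \<theta>)^2) - 1 - sqrt u * cos \<theta> + sqrt u"

lemma K_kernel_nonneg: "0 \<le> y \<Longrightarrow> y < 1 \<Longrightarrow> 0 \<le> K_kernel y \<theta>"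
  unfolding K_kernel_def
  using one_minus_mult_sin_sq_pos[of y \<theta>] one_le_inverse_sqrt_one_minus[of "y * (sin \<theta>)^2"] by simp

lemma continuous_on_K_kernel: "0 \<le> y \<Longrightarrow> y < 1 \<Longrightarrow> continuous_on A (K_kernel y)"
  unfolding K_kernel_def using one_minus_mult_sin_sq_pos
  by (auto intro!: continuous_intros simp: less_imp_neq[symmetric])

lemma continuous_on_E_kernel: "0 \<le> u \<Longrightarrow> continuous_on A (E_kernel u)"
  unfolding E_kernel_def by (auto intro!: continuous_intros)

lemma E_kernel_nonneg:
  assumes u: "0 \<le> u" "u \<le> 1" and \<theta>: "0 \<le> \<theta>" "\<theta> \<le> pi/2"
  shows "0 \<le> E_kernel u \<theta>"
proof -
  define r c where "r = sqrt u" and "c = cos \<theta>"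
  have r: "0 \<le> r" "r \<le> 1" and c: "0 \<le> c" "c \<le> 1"
    using u \<theta> unfolding r_def c_def by (auto intro!: cos_ge_zero)
  have "u = r^2" using u unfolding r_def by simp
  then have arg: "1 - u * (sin \<theta>)^2 = (1 - r * (1 - c))^2 + 2 * r * (1 - c) * (1 - r)"
    unfolding c_def sin_squared_eq by (simp add: power2_eq_square algebra_simps)
  have "0 \<le> 2 * r * (1 - c) * (1 - r)" using r c by simp
  then have "\<bar>1 - r * (1 - c)\<bar> \<le> sqrt (1 - u * (sin \<theta>)^2)"
    unfolding arg by (intro real_le_rsqrt) simp
  then show ?thesis
    unfolding E_kernel_def r_def[symmetric] c_def[symmetric] by (simp add: algebra_simps)
qed

lemma ellipticK_sqrt_minus_pi_half:
  assumes "0 \<le> y" "y < 1"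
  shows "ellipticK (sqrt y) - pi/2 = (\<integral>\<theta>. K_kernel y \<theta> * indicator {0..pi/2} \<theta> \<partial>lborel)"
proof -
  have "continuous_on {0..pi/2} (\<lambda>\<theta>. 1 / sqrt (1 - y * (sin \<theta>)^2))"
    using one_minus_mult_sin_sq_pos[OF assms]
    by (auto intro!: continuous_intros simp: less_imp_neq[symmetric])
  then have "integral {0..pi/2} (K_kernel y) = ellipticK (sqrt y) - integral {0..pi/2} (\<lambda>\<theta>. 1)"
    unfolding K_kernel_def ellipticK_def using assms
    by (subst integral_diff) (auto intro!: integrable_continuous_interval)
  then show ?thesis
    using integral_eq_lborel_indicator[OF continuous_on_K_kernel[OF assms]] by simp
qed

lemma ellipticE_sqrt_minus_linear:
  assumes "0 \<le> u"
  shows "ellipticE (sqrt u) - (pi/2 - (pi/2 - 1) * sqrt u)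
       = (\<integral>\<theta>. E_kernel u \<theta> * indicator {0..pi/2} \<theta> \<partial>lborel)"
proof -
  have int: "(\<lambda>\<theta>. sqrt (1 - u * (sin \<theta>)^2)) integrable_on {0..pi/2}"
    "(\<lambda>\<theta>. sqrt u * cos \<theta>) integrable_on {0..pi/2}"
    by (auto intro!: integrable_continuous_interval continuous_intros)
  have "integral {0..pi/2} (E_kernel u)
      = ellipticE (sqrt u) - integral {0..pi/2} (\<lambda>\<theta>. 1)
        - integral {0..pi/2} (\<lambda>\<theta>. sqrt u * cos \<theta>) + integral {0..pi/2} (\<lambda>\<theta>. sqrt u)"
    unfolding E_kernel_def ellipticE_def using assms
    by (subst integral_add integral_diff,
        (auto intro!: integrable_diff int integrable_continuous_interval continuous_intros)[2])+ simp
  moreover have "integral {0..pi/2} (\<lambda>\<theta>. sqrt u * cos \<theta>) = sqrt u"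
    by (subst integral_mult_right) simp
  ultimately show ?thesis
    using integral_eq_lborel_indicator[OF continuous_on_E_kernel[OF assms]]
    by (simp add: algebra_simps)
qed

lemma ellipticE_sqrt_le_pi_half:
  assumes "0 \<le> t"
  shows "ellipticE (sqrt t) \<le> pi/2"
proof -
  have "ellipticE (sqrt t) \<le> integral {0..pi/2} (\<lambda>\<theta>. 1::real)"
    unfolding ellipticE_def using assms
    by (intro integral_le integrable_continuous_interval) (auto intro!: continuous_intros)
  then show ?thesis by simp
qed

definition K_excess :: "real \<Rightarrow> real" where
  "K_excess y = indicator {0<..<1} y * (ellipticK (sqrt y) - pi/2)"

definition E_excess :: "real \<Rightarrow> real" where
  "E_excess t = indicator {0<..<1} t * (ellipticE (sqrt t) - (pi/2 - (pi/2 - 1) * sqrt t))"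

lemma K_excess_eq_integral:
  "K_excess y = indicator {0<..<1} y * (\<integral>\<theta>. K_kernel y \<theta> * indicator {0..pi/2} \<theta> \<partial>lborel)"
  unfolding K_excess_def by (cases "y \<in> {0<..<1}") (auto simp: ellipticK_sqrt_minus_pi_half)

lemma E_excess_eq_integral:
  "E_excess t = indicator {0<..<1} t * (\<integral>\<theta>. E_kernel t \<theta> * indicator {0..pi/2} \<theta> \<partial>lborel)"
  unfolding E_excess_def by (cases "t \<in> {0<..<1}") (auto simp: ellipticE_sqrt_minus_linear)

lemma borel_measurable_K_excess[measurable]: "K_excess \<in> borel_measurable borel"
  unfolding K_excess_eq_integral[abs_def] K_kernel_def by measurable

lemma borel_measurable_E_excess[measurable]: "E_excess \<in> borel_measurable borel"
  unfolding E_excess_eq_integral[abs_def] E_kernel_def by measurable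

lemma K_excess_nonneg: "0 \<le> K_excess y"
  unfolding K_excess_eq_integral
  by (auto intro!: Bochner_Integration.integral_nonneg K_kernel_nonneg simp: indicator_def)

lemma E_excess_nonneg: "0 \<le> E_excess t"
  unfolding E_excess_eq_integral
  by (auto intro!: Bochner_Integration.integral_nonneg E_kernel_nonneg simp: indicator_def)

lemma E_excess_le_one: "E_excess t \<le> 1"
proof (cases "t \<in> {0<..<1}")
  case True
  have "(pi/2 - 1) * sqrt t \<le> (pi/2 - 1) * 1"
    using True pi_gt3 by (intro mult_left_mono) auto
  then show ?thesis
    using True ellipticE_sqrt_le_pi_half[of t] pi_less_4 unfolding E_excess_def by simp
qed (simp add: E_excess_def)

lemma rescaled_K_kernel_antiderivative:
  fixes u q z :: real
  assumes z: "0 < z" and uq: "u * q < z powr (2/3)"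
  shows "((\<lambda>z. 3 * (sqrt (z powr (2/3) - u * q) - z powr (1/3))) has_real_derivative
          1 / z powr (2/3) * (1 / sqrt (1 - u / z powr (2/3) * q) - 1)) (at z)"
proof -
  define w where "w = z powr (1/3)"
  have w: "0 < w" "z powr (2/3) = w^2" using z unfolding w_def
    by (simp_all add: power2_eq_square flip: powr_add)
  have "z powr (-1/3) = 1/w" "z powr (-2/3) = 1/w^2" unfolding w_def using z
    by (simp_all add: power2_eq_square powr_minus_divide flip: powr_add)
  then have exps: "z powr (2/3 - 1) = 1/w" "z powr (1/3 - 1) = 1/w^2" by simp_all
  have pos: "0 < w^2 - u * q" using uq w by simp
  have "sqrt (1 - u / w^2 * q) = sqrt ((w^2 - u * q) / w^2)"
    using w by (simp add: diff_divide_distrib)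
  also have "\<dots> = sqrt (w^2 - u * q) / w"
    using w by (simp add: real_sqrt_divide)
  finally have root: "sqrt (1 - u / w^2 * q) = sqrt (w^2 - u * q) / w" .
  have "((\<lambda>z. 3 * (sqrt (z powr (2/3) - u * q) - z powr (1/3))) has_real_derivative
        3 * ((2/3) * z powr (2/3 - 1) / (2 * sqrt (z powr (2/3) - u * q)) - (1/3) * z powr (1/3 - 1))) (at z)"
    using z pos w by (auto intro!: derivative_eq_intros) (metis divide_inverse_commute)
  moreover have "3 * ((2/3) * z powr (2/3 - 1) / (2 * sqrt (z powr (2/3) - u * q)) - (1/3) * z powr (1/3 - 1))
      = 1 / z powr (2/3) * (1 / sqrt (1 - u / z powr (2/3) * q) - 1)"
    unfolding exps w(2) root using w pos by (simp add: field_simps power2_eq_square)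
  ultimately show ?thesis by simp
qed

lemma nn_integral_rescaled_K_kernel:
  assumes u: "0 < u" "u < 1" and \<theta>: "0 \<le> \<theta>" "\<theta> < pi/2"
  shows "(\<integral>\<^sup>+z. ennreal (indicator {u powr (3/2)<..<1} z * (1 / z powr (2/3) * K_kernel (u / z powr (2/3)) \<theta>)) \<partial>lborel)
       = ennreal (3 * E_kernel u \<theta>)"
proof -
  define a where "a = u powr (3/2)"
  have a: "0 < a" "a < 1" "a powr (2/3) = u" "a powr (1/3) = sqrt u"
    using u powr_less_mono2[of "3/2" u 1] unfolding a_def
    by (simp_all add: powr_powr powr_half_sqrt)
  define q where "q = (sin \<theta>)^2"
  have cos_pos: "0 < cos \<theta>" using \<theta> by (intro cos_gt_zero_pi) auto
  have q: "0 \<le> q" "q < 1"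
    unfolding q_def using cos_pos by (auto simp: sin_squared_eq abs_square_le_1)
  define \<phi> where "\<phi> = (\<lambda>z::real. 1 / z powr (2/3) * (1 / sqrt (1 - u / z powr (2/3) * q) - 1))"
  define \<Phi> where "\<Phi> = (\<lambda>z::real. 3 * (sqrt (z powr (2/3) - u * q) - z powr (1/3)))"
  have "(\<integral>\<^sup>+z. ennreal (indicator {a<..<1} z * (1 / z powr (2/3) * K_kernel (u / z powr (2/3)) \<theta>)) \<partial>lborel)
      = (\<integral>\<^sup>+z. ennreal (\<phi> z) * indicator {a..1} z \<partial>lborel)"
  proof (rule nn_integral_cong_AE)
    have "AE z in lborel. z \<noteq> a \<and> z \<noteq> 1" by (intro eventually_conj AE_lborel_singleton)
    then show "AE z in lborel. ennreal (indicator {a<..<1} z * (1 / z powr (2/3) * K_kernel (u / z powr (2/3)) \<theta>))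
        = ennreal (\<phi> z) * indicator {a..1} z"
      by eventually_elim (auto simp: \<phi>_def K_kernel_def q_def split: split_indicator)
  qed
  also have "\<dots> = \<Phi> 1 - \<Phi> a"
  proof (rule nn_integral_FTC_Icc)
    fix z assume z: "z \<in> {a..1}"
    then have "u \<le> z powr (2/3)"
      using a powr_mono2[of "2/3" a z] by auto
    moreover have "u * q < u" using u q by simp
    moreover have "0 < z" using z a by auto
    ultimately have "u * q < z powr (2/3)" "0 < z" "u / z powr (2/3) * q < 1" by simp_all
    then show "(\<Phi> has_real_derivative \<phi> z) (at z)" "0 \<le> \<phi> z"
      unfolding \<Phi>_def \<phi>_def using u q one_le_inverse_sqrt_one_minus[of "u / z powr (2/3) * q"]
      by (blast intro: rescaled_K_kernel_antiderivative, simp)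
  qed (use a in \<open>auto simp: \<phi>_def\<close>)
  also have "\<Phi> 1 - \<Phi> a = 3 * E_kernel u \<theta>"
  proof -
    have "u - u * q = (sqrt u * cos \<theta>)^2"
      unfolding q_def using u by (simp add: power_mult_distrib sin_squared_eq algebra_simps)
    then have "sqrt (u - u * q) = sqrt u * cos \<theta>" using cos_pos u by simp
    then show ?thesis unfolding \<Phi>_def E_kernel_def q_def using a by (simp add: algebra_simps)
  qed
  finally show ?thesis unfolding a_def .
qed

lemma rescaled_K_excess_eq_nn_integral:
  assumes u: "0 < u" "u < 1"
  shows "ennreal (indicator {0<..<1} z * (1 / z powr (2/3)) * K_excess (u / z powr (2/3)))
       = (\<integral>\<^sup>+\<theta>. ennreal (indicator {u powr (3/2)<..<1} z * (1 / z powr (2/3) * K_kernel (u / z powr (2/3)) \<theta>)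
              * indicator {0..pi/2} \<theta>) \<partial>lborel)"
proof (cases "z \<in> {u powr (3/2)<..<1}")
  case True
  then have z: "0 < z" "z < 1" using u by (auto intro: less_trans[rotated])
  define y where "y = u / z powr (2/3)"
  have y: "0 < y" "y < 1"
    using powr_two_thirds_gt_iff[of u z] True z u unfolding y_def by auto
  have int: "integrable lborel (\<lambda>\<theta>. K_kernel y \<theta> * indicator {0..pi/2} \<theta>)"
    using continuous_on_K_kernel[of y UNIV] y
    by (intro borel_integrable_atLeastAtMost) (auto simp: continuous_on_eq_continuous_at)
  have "indicator {0<..<1} z * (1 / z powr (2/3)) * K_excess y
      = (\<integral>\<theta>. 1 / z powr (2/3) * (K_kernel y \<theta> * indicator {0..pi/2} \<theta>) \<partial>lborel)"
    using z y unfolding K_excess_eq_integral by simp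
  also have "ennreal \<dots> = (\<integral>\<^sup>+\<theta>. ennreal (1 / z powr (2/3) * (K_kernel y \<theta> * indicator {0..pi/2} \<theta>)) \<partial>lborel)"
    using int y by (intro nn_integral_eq_integral[symmetric])
      (auto intro!: AE_I2 divide_nonneg_nonneg mult_nonneg_nonneg K_kernel_nonneg)
  finally show ?thesis using True by (simp add: y_def mult.assoc)
next
  case False
  have "indicator {0<..<1} z * K_excess (u / z powr (2/3)) = 0"
  proof (cases "0 < z \<and> z < 1")
    case True
    with False have "\<not> u / z powr (2/3) < 1"
      using powr_two_thirds_gt_iff[of u z] u by auto
    then show ?thesis unfolding K_excess_def by simp
  qed simp
  then show ?thesis using False by (auto simp: ennreal_0)
qed

lemma nn_integral_rescaled_K_excess:
  assumes u: "0 < u" "u < 1"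
  shows "(\<integral>\<^sup>+z. ennreal (indicator {0<..<1} z * (1 / z powr (2/3)) * K_excess (u / z powr (2/3))) \<partial>lborel)
       = ennreal (3 * E_excess u)"
proof -
  define F where "F = (\<lambda>z \<theta>. ennreal (indicator {u powr (3/2)<..<1} z
    * (1 / z powr (2/3) * K_kernel (u / z powr (2/3)) \<theta>) * indicator {0..pi/2} \<theta>))"
  have F_meas: "(\<lambda>p. F (fst p) (snd p)) \<in> borel_measurable (lborel \<Otimes>\<^sub>M lborel)"
    unfolding F_def K_kernel_def by measurable
  have inner: "(\<integral>\<^sup>+z. F z \<theta> \<partial>lborel) = ennreal (3 * E_kernel u \<theta> * indicator {0..pi/2} \<theta>)"
    if "\<theta> \<noteq> pi/2" for \<theta>
  proof (cases "\<theta> \<in> {0..pi/2}")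
    case True
    have "(\<integral>\<^sup>+z. F z \<theta> \<partial>lborel) = (\<integral>\<^sup>+z. ennreal (indicator {u powr (3/2)<..<1} z
        * (1 / z powr (2/3) * K_kernel (u / z powr (2/3)) \<theta>)) \<partial>lborel)"
      using True by (simp add: F_def)
    also have "\<dots> = ennreal (3 * E_kernel u \<theta> * indicator {0..pi/2} \<theta>)"
      using True that u by (subst nn_integral_rescaled_K_kernel) auto
    finally show ?thesis .
  qed (simp add: F_def)
  have int: "integrable lborel (\<lambda>\<theta>. E_kernel u \<theta> * indicator {0..pi/2} \<theta>)"
    using continuous_on_E_kernel[of u UNIV] u
    by (intro borel_integrable_atLeastAtMost) (auto simp: continuous_on_eq_continuous_at)
  have "(\<integral>\<^sup>+z. ennreal (indicator {0<..<1} z * (1 / z powr (2/3)) * K_excess (u / z powr (2/3))) \<partial>lborel)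
       = (\<integral>\<^sup>+z. (\<integral>\<^sup>+\<theta>. F z \<theta> \<partial>lborel) \<partial>lborel)"
    unfolding F_def by (intro nn_integral_cong rescaled_K_excess_eq_nn_integral u)
  also have "\<dots> = (\<integral>\<^sup>+\<theta>. (\<integral>\<^sup>+z. F z \<theta> \<partial>lborel) \<partial>lborel)"
    using lborel_pair.Fubini[OF F_meas] by simp
  also have "\<dots> = (\<integral>\<^sup>+\<theta>. ennreal (3 * E_kernel u \<theta> * indicator {0..pi/2} \<theta>) \<partial>lborel)"
    using AE_lborel_singleton[of "pi/2"] by (intro nn_integral_cong_AE) (auto elim!: eventually_mono simp: inner)
  also have "\<dots> = ennreal (\<integral>\<theta>. 3 * E_kernel u \<theta> * indicator {0..pi/2} \<theta> \<partial>lborel)"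
    using int u by (intro nn_integral_eq_integral)
      (auto simp: mult.assoc intro!: AE_I2 E_kernel_nonneg split: split_indicator)
  also have "\<dots> = ennreal (3 * E_excess u)"
    using u by (simp add: E_excess_eq_integral mult.assoc)
  finally show ?thesis .
qed

definition K_pair_integrand :: "(real \<Rightarrow> real) \<Rightarrow> real \<times> real \<Rightarrow> real" where
  "K_pair_integrand g p = indicator ({0<..<1} \<times> {0<..<1}) p
     * ((ellipticK (sqrt (fst p)) - pi/2) * g (fst p * (snd p) powr (2/3)))"

lemma K_pair_integrand_altdef:
  "K_pair_integrand g p = indicator {0<..<1} (snd p) * K_excess (fst p) * g (fst p * (snd p) powr (2/3))"
  by (cases p) (auto simp: K_pair_integrand_def K_excess_def indicator_def)

lemma nn_integral_K_pair_integrand: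
  fixes h :: "real \<Rightarrow> real"
  assumes [measurable]: "h \<in> borel_measurable borel" and h_nonneg: "\<And>t. 0 \<le> h t"
    and h_vanishes: "\<And>t. t \<notin> {0<..<1} \<Longrightarrow> h t = 0"
  shows "(\<integral>\<^sup>+p. ennreal (K_pair_integrand h p) \<partial>(lborel \<Otimes>\<^sub>M lborel)) = (\<integral>\<^sup>+t. ennreal (3 * E_excess t * h t) \<partial>lborel)"
proof -
  define G where "G = (\<lambda>z t. ennreal (indicator {0<..<1} z * (1 / z powr (2/3)) * K_excess (t / z powr (2/3)) * h t))"
  have G_meas: "(\<lambda>p. G (fst p) (snd p)) \<in> borel_measurable (lborel \<Otimes>\<^sub>M lborel)"
    unfolding G_def by measurable
  have rescale: "(\<integral>\<^sup>+x. ennreal (K_pair_integrand h (x, z)) \<partial>lborel) = (\<integral>\<^sup>+t. G z t \<partial>lborel)" for z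
  proof (cases "z \<in> {0<..<1}")
    case True
    define c where "c = z powr (2/3)"
    have c: "0 < c" using True c_def by auto
    have "(\<integral>\<^sup>+x. ennreal (K_pair_integrand h (x, z)) \<partial>lborel) = (\<integral>\<^sup>+x. ennreal (K_excess x * h (x * c)) \<partial>lborel)"
      using True by (simp add: K_pair_integrand_altdef c_def)
    also have "\<dots> = \<bar>1/c\<bar> * (\<integral>\<^sup>+x. ennreal (K_excess (0 + (1/c) * x) * h ((0 + (1/c) * x) * c)) \<partial>lborel)"
      using c by (intro nn_integral_real_affine) auto
    also have "\<dots> = (\<integral>\<^sup>+x. ennreal (1/c) * ennreal (K_excess (x / c) * h x) \<partial>lborel)"
      using c by (subst nn_integral_cmult) auto
    also have "\<dots> = (\<integral>\<^sup>+t. G z t \<partial>lborel)"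
      using True c by (intro nn_integral_cong) (simp add: G_def c_def ennreal_mult'[symmetric] mult.assoc)
    finally show ?thesis .
  qed (simp add: K_pair_integrand_altdef G_def)
  have kernel: "(\<integral>\<^sup>+z. G z t \<partial>lborel) = ennreal (3 * E_excess t * h t)" for t
  proof (cases "t \<in> {0<..<1}")
    case True
    have "(\<integral>\<^sup>+z. G z t \<partial>lborel) = (\<integral>\<^sup>+z. ennreal (indicator {0<..<1} z * (1 / z powr (2/3)) * K_excess (t / z powr (2/3))) * ennreal (h t) \<partial>lborel)"
      by (intro nn_integral_cong) (simp only: G_def ennreal_mult''[OF h_nonneg])
    also have "\<dots> = ennreal (3 * E_excess t * h t)"
      using True by (simp add: nn_integral_multc nn_integral_rescaled_K_excess ennreal_mult'' h_nonneg
          del: times_divide_eq_right)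
    finally show ?thesis .
  qed (simp add: G_def h_vanishes)
  have "(\<integral>\<^sup>+p. ennreal (K_pair_integrand h p) \<partial>(lborel \<Otimes>\<^sub>M lborel))
      = (\<integral>\<^sup>+z. (\<integral>\<^sup>+x. ennreal (K_pair_integrand h (x, z)) \<partial>lborel) \<partial>lborel)"
    by (rule lborel_pair.nn_integral_snd[symmetric]) (simp add: K_pair_integrand_altdef)
  also have "\<dots> = (\<integral>\<^sup>+z. (\<integral>\<^sup>+t. G z t \<partial>lborel) \<partial>lborel)"
    by (simp add: rescale)
  also have "\<dots> = (\<integral>\<^sup>+t. (\<integral>\<^sup>+z. G z t \<partial>lborel) \<partial>lborel)"
    using lborel_pair.Fubini[OF G_meas] by simp
  finally show ?thesis by (simp add: kernel)
qed

lemma integral_K_pair_integrand_nonneg: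
  fixes h :: "real \<Rightarrow> real"
  assumes h_meas[measurable]: "h \<in> borel_measurable borel" and h_nonneg: "\<And>t. 0 \<le> h t"
    and h_vanishes: "\<And>t. t \<notin> {0<..<1} \<Longrightarrow> h t = 0" and h_int: "integrable lborel h"
  shows "integrable (lborel \<Otimes>\<^sub>M lborel) (K_pair_integrand h)"
    and "integrable lborel (\<lambda>t. E_excess t * h t)"
    and "(\<integral>p. K_pair_integrand h p \<partial>(lborel \<Otimes>\<^sub>M lborel)) = 3 * (\<integral>t. E_excess t * h t \<partial>lborel)"
proof -
  have meas: "K_pair_integrand h \<in> borel_measurable (lborel \<Otimes>\<^sub>M lborel)"
    unfolding K_pair_integrand_altdef[abs_def] by measurable
  have nonneg: "0 \<le> K_pair_integrand h p" for p
    unfolding K_pair_integrand_altdef by (auto intro!: mult_nonneg_nonneg K_excess_nonneg h_nonneg)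
  show E_int: "integrable lborel (\<lambda>t. E_excess t * h t)"
    using E_excess_nonneg E_excess_le_one h_nonneg
    by (intro Bochner_Integration.integrable_bound[OF h_int]) (auto intro!: AE_I2 mult_left_le_one_le)
  have "(\<integral>\<^sup>+t. ennreal (3 * E_excess t * h t) \<partial>lborel) = ennreal (3 * (\<integral>t. E_excess t * h t \<partial>lborel))"
    using E_int E_excess_nonneg h_nonneg
    by (subst nn_integral_eq_integral) (auto simp: mult.assoc intro!: AE_I2)
  then have nn: "(\<integral>\<^sup>+p. ennreal (K_pair_integrand h p) \<partial>(lborel \<Otimes>\<^sub>M lborel)) = ennreal (3 * (\<integral>t. E_excess t * h t \<partial>lborel))"
    using nn_integral_K_pair_integrand[OF h_meas h_nonneg h_vanishes] by simp
  show int: "integrable (lborel \<Otimes>\<^sub>M lborel) (K_pair_integrand h)"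
    using meas nonneg nn by (intro integrableI_nonneg) auto
  have "ennreal (\<integral>p. K_pair_integrand h p \<partial>(lborel \<Otimes>\<^sub>M lborel)) = ennreal (3 * (\<integral>t. E_excess t * h t \<partial>lborel))"
    using nn_integral_eq_integral[OF int] nonneg nn by simp
  then show "(\<integral>p. K_pair_integrand h p \<partial>(lborel \<Otimes>\<^sub>M lborel)) = 3 * (\<integral>t. E_excess t * h t \<partial>lborel)"
    using E_excess_nonneg h_nonneg nonneg
    by (subst (asm) ennreal_inj) (auto intro!: Bochner_Integration.integral_nonneg)
qed

lemma set_integral_K_pair_integrand:
  fixes g :: "real \<Rightarrow> real"
  assumes "set_integrable lborel {0<..<1} g"
  shows "(LINT p:({0<..<1} \<times> {0<..<1})|(lborel \<Otimes>\<^sub>M lborel). (ellipticK (sqrt (fst p)) - pi/2) * g (fst p * (snd p) powr (2/3)))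
       = 3 * (LINT t:{0<..<1}|lborel. E_excess t * g t)"
proof -
  define G where "G = (\<lambda>t. indicator {0<..<1} t * g t)"
  have G_int: "integrable lborel G" using assms by (simp add: set_integrable_def G_def)
  have [measurable]: "G \<in> borel_measurable borel" using borel_measurable_integrable[OF G_int] by simp
  define h\<^sub>1 h\<^sub>2 where "h\<^sub>1 = (\<lambda>t. max (G t) 0)" and "h\<^sub>2 = (\<lambda>t. max (- G t) 0)"
  have G_split: "G t = h\<^sub>1 t - h\<^sub>2 t" for t by (simp add: h\<^sub>1_def h\<^sub>2_def)
  have parts: "integrable (lborel \<Otimes>\<^sub>M lborel) (K_pair_integrand h)"
    "integrable lborel (\<lambda>t. E_excess t * h t)"
    "(\<integral>p. K_pair_integrand h p \<partial>(lborel \<Otimes>\<^sub>M lborel)) = 3 * (\<integral>t. E_excess t * h t \<partial>lborel)"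
    if "h \<in> {h\<^sub>1, h\<^sub>2}" for h
    using that G_int unfolding h\<^sub>1_def h\<^sub>2_def
    by (auto intro!: integral_K_pair_integrand_nonneg simp: G_def)
  have g_split: "g y = h\<^sub>1 y - h\<^sub>2 y" if "y \<in> {0<..<1}" for y
    using that G_split[of y] by (simp add: G_def)
  have "(LINT p:({0<..<1} \<times> {0<..<1})|(lborel \<Otimes>\<^sub>M lborel). (ellipticK (sqrt (fst p)) - pi/2) * g (fst p * (snd p) powr (2/3)))
      = (\<integral>p. K_pair_integrand h\<^sub>1 p - K_pair_integrand h\<^sub>2 p \<partial>(lborel \<Otimes>\<^sub>M lborel))"
    unfolding set_lebesgue_integral_def
  proof (intro Bochner_Integration.integral_cong refl)
    fix p :: "real \<times> real"
    show "indicator ({0<..<1} \<times> {0<..<1}) p *\<^sub>R ((ellipticK (sqrt (fst p)) - pi/2) * g (fst p * (snd p) powr (2/3)))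
        = K_pair_integrand h\<^sub>1 p - K_pair_integrand h\<^sub>2 p"
    proof (cases "p \<in> {0<..<1} \<times> {0<..<1}")
      case True
      then have g_eq: "g (fst p * (snd p) powr (2/3)) = h\<^sub>1 (fst p * (snd p) powr (2/3)) - h\<^sub>2 (fst p * (snd p) powr (2/3))"
        by (intro g_split mult_powr_two_thirds_mem_unit_interval) auto
      show ?thesis using True by (subst g_eq) (simp add: K_pair_integrand_def right_diff_distrib)
    qed (simp add: K_pair_integrand_def)
  qed
  also have "\<dots> = 3 * (\<integral>t. E_excess t * h\<^sub>1 t - E_excess t * h\<^sub>2 t \<partial>lborel)"
    using parts by simp
  also have "(\<integral>t. E_excess t * h\<^sub>1 t - E_excess t * h\<^sub>2 t \<partial>lborel) = (LINT t:{0<..<1}|lborel. E_excess t * g t)"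
    unfolding set_lebesgue_integral_def
    by (simp add: G_split[symmetric] flip: right_diff_distrib) (simp add: G_def mult.left_commute)
  finally show ?thesis .
qed

theorem mainTheorem11:
  fixes g :: "real \<Rightarrow> real"
  assumes "set_integrable lborel {0<..<1} g"
  shows "(LINT x:{0<..<1}|lborel. ellipticE (sqrt x) * g x)
       = (LINT x:{0<..<1}|lborel. (pi/2 - (pi/2 - 1) * sqrt x) * g x)
         + (1/3) * (LINT p:({0<..<1} \<times> {0<..<1})|(lborel \<Otimes>\<^sub>M lborel).
              (ellipticK (sqrt (fst p)) - pi/2) * g (fst p * (snd p) powr (2/3)))"
proof -
  have E_int: "set_integrable lborel {0<..<1} (\<lambda>x. E_excess x * g x)"
    using assms E_excess_nonneg E_excess_le_one by (intro set_integrable_bounded_mult[where C = 1]) auto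
  have "\<bar>pi/2 - (pi/2 - 1) * sqrt x\<bar> \<le> 2" if "x \<in> {0<..<1}" for x
  proof -
    have "(pi/2 - 1) * sqrt x \<le> pi/2 - 1"
      using that pi_gt3 by (intro mult_left_le) auto
    moreover have "0 \<le> (pi/2 - 1) * sqrt x" using that pi_gt3 by simp
    ultimately show ?thesis using pi_less_4 unfolding abs_le_iff by linarith
  qed
  then have linear_int: "set_integrable lborel {0<..<1} (\<lambda>x. (pi/2 - (pi/2 - 1) * sqrt x) * g x)"
    using assms by (intro set_integrable_bounded_mult[where C = 2]) auto
  have "(LINT x:{0<..<1}|lborel. ellipticE (sqrt x) * g x)
      = (LINT x:{0<..<1}|lborel. E_excess x * g x + (pi/2 - (pi/2 - 1) * sqrt x) * g x)"
    by (intro set_lebesgue_integral_cong) (auto simp: E_excess_def algebra_simps)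
  also have "\<dots> = (LINT x:{0<..<1}|lborel. E_excess x * g x) + (LINT x:{0<..<1}|lborel. (pi/2 - (pi/2 - 1) * sqrt x) * g x)"
    using E_int linear_int by (rule set_integral_add)
  finally show ?thesis using set_integral_K_pair_integrand[OF assms] by simp
qed

end
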